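(* Let $f$ be one of $G_3,G_4,G_5,G_6,G^{\#}_{10}$, and let $\widehat p_0,\dots,\widehat p_4$ be a normalized configuration of 5 distinct points on the unit sphere $S^2$ that minimizes the energy $\sum_{i<j}f(\|\widehat p_i-\widehat p_j\|)$ among all 5-point configurations on $S^2$. Then $\|\widehat p_4-\widehat p_0\|>1/2$ and $\|\widehat p_4-\widehat p_i\|>4/\sqrt{13}$ for $i=1,2,3$.
   Context: $G_k(r)=(4-r^2)^k$ and $G^{\#}_{10}=G_{10}+28G_5+102G_2$. A configuration $\widehat p_0,\dots,\widehat p_4$ on $S^2$ is normalized if $\widehat p_4=(0,0,1)$ and $\|\widehat p_4-\widehat p_0\|\le\|\widehat p_4-\widehat p_i\|$ for all $i\in\{1,2,3\}$. *)

theory Defs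
  imports "HOL-Analysis.Analysis"
begin

definition G :: "nat \<Rightarrow> real \<Rightarrow> real" where
  "G k r = (4 - r\<^sup>2) ^ k"

definition G10sharp :: "real \<Rightarrow> real" where
  "G10sharp r = G 10 r + 28 * G 5 r + 102 * G 2 r"

definition S2 :: "(real^3) set" where
  "S2 = sphere 0 1"

definition config5 :: "(nat \<Rightarrow> real^3) \<Rightarrow> bool" where
  "config5 p \<longleftrightarrow> (\<forall>i<5. p i \<in> S2)"

definition energy :: "(real \<Rightarrow> real) \<Rightarrow> (nat \<Rightarrow> real^3) \<Rightarrow> real" where
  "energy f p = (\<Sum>j<5. \<Sum>i<j. f (norm (p i - p j)))"

definition north :: "real^3" where
  "north = vector [0, 0, 1]"

definition normalized :: "(nat \<Rightarrow> real^3) \<Rightarrow> bool" where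
  "normalized p \<longleftrightarrow> p 4 = north \<and>
     (\<forall>i\<in>{1,2,3}. norm (p 4 - p 0) \<le> norm (p 4 - p i))"

definition minimizer :: "(real \<Rightarrow> real) \<Rightarrow> (nat \<Rightarrow> real^3) \<Rightarrow> bool" where
  "minimizer f p \<longleftrightarrow> config5 p \<and> (\<forall>q. config5 q \<longrightarrow> energy f p \<le> energy f q)"

end

theory Submission
  imports Defs
begin

text \<open>Each energy considered has the form \<open>f r = H (4 - r\<^sup>2)\<close> with \<open>H\<close> nonnegative and
increasing on \<open>[0, \<infinity>)\<close>, and for unit vectors the weight \<open>4 - |p\<^sub>i - p\<^sub>j|\<^sup>2 = 2 + 2 \<langle>p\<^sub>i, p\<^sub>j\<rangle>\<close>
lies in \<open>[0, 4]\<close>. The ten weights of five points sum to at least 15, since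
\<open>\<Sum>\<^sub>i\<^sub><\<^sub>j |p\<^sub>i - p\<^sub>j|\<^sup>2 = 25 - |\<Sum> p\<^sub>i|\<^sup>2\<close>. A minimizer has energy at most that of the
triangular bipyramid, \<open>6 H 2 + 3 H 1 + H 0\<close>. If \<open>|p\<^sub>4 - p\<^sub>0| \<le> 1/2\<close>, the single weight
\<open>w\<^sub>0\<^sub>4 \<ge> 15/4\<close> already costs more; if \<open>|p\<^sub>4 - p\<^sub>i| \<le> 4/\<surd>13\<close>, normalization makes
\<open>p\<^sub>0\<close> just as close, and two weights \<open>\<ge> 36/13\<close> cost more. For \<open>G\<^sub>3\<close> the two large weights
alone do not suffice, and the remaining ones are bounded below through the weight sum and a
tangent line of \<open>a\<^sup>3\<close>.\<close>

lemma sum_pairs_norm_diff_sq: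
  fixes x :: "nat \<Rightarrow> 'a::real_inner"
  shows "(\<Sum>j<n. \<Sum>i<j. (norm (x i - x j))\<^sup>2)
           = n * (\<Sum>i<n. (norm (x i))\<^sup>2) - (norm (\<Sum>i<n. x i))\<^sup>2"
proof (induction n)
  case 0 then show ?case by simp
next
  case (Suc n)
  have "(\<Sum>i<n. (norm (x i - x n))\<^sup>2)
          = (\<Sum>i<n. (norm (x i))\<^sup>2) - 2 * ((\<Sum>i<n. x i) \<bullet> x n) + n * (norm (x n))\<^sup>2"
  proof -
    have "(norm (x i - x n))\<^sup>2 = (norm (x i))\<^sup>2 - 2 * (x i \<bullet> x n) + (norm (x n))\<^sup>2" for i
      by (simp add: power2_norm_eq_inner inner_diff inner_commute)
    then show ?thesis
      by (simp add: inner_sum_left sum.distrib sum_subtractf sum_distrib_left)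
  qed
  then show ?case using Suc.IH
    by (simp add: power2_norm_eq_inner inner_add algebra_simps inner_commute)
qed

lemma sum_pairs_norm_diff_sq_le_unit:
  fixes x :: "nat \<Rightarrow> 'a::real_inner"
  assumes "\<And>i. i < n \<Longrightarrow> norm (x i) = 1"
  shows "(\<Sum>j<n. \<Sum>i<j. (norm (x i - x j))\<^sup>2) \<le> n\<^sup>2"
proof -
  have "(\<Sum>i<n. (norm (x i))\<^sup>2) = n" using assms by simp
  then show ?thesis unfolding sum_pairs_norm_diff_sq by (simp add: power2_eq_square)
qed

lemma norm_diff_sq_le_unit:
  fixes x y :: "'a::real_normed_vector"
  assumes "norm x = 1" "norm y = 1"
  shows "(norm (x - y))\<^sup>2 \<le> 4"
proof -
  have "norm (x - y) \<le> 2" using norm_triangle_ineq4[of x y] assms by simp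
  then show ?thesis using power_mono[of "norm (x - y)" 2 2] by simp
qed

text \<open>A pair is stored as \<open>(j, i)\<close> with \<open>i < j\<close>, in the summation order of \<open>energy\<close>.\<close>

definition pairs5 :: "(nat \<times> nat) set" where
  "pairs5 = (SIGMA j:{..<5}. {..<j})"

lemma finite_pairs5 [simp]: "finite pairs5"
  by (simp add: pairs5_def)

lemma card_pairs5: "card pairs5 = 10"
  by (simp add: pairs5_def eval_nat_numeral lessThan_Suc)

lemma sum_pairs5: "(\<Sum>(j, i)\<in>pairs5. g i j) = (\<Sum>j<5. \<Sum>i<j. g i j)"
  by (simp add: pairs5_def sum.Sigma)

lemma energy_ge_affine_minorants:
  fixes H :: "real \<Rightarrow> real" and c d d' t :: real
  assumes p: "config5 p" and c: "0 \<le> c"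
    and lower: "\<And>a. 0 \<le> a \<Longrightarrow> c * a + d \<le> H a"
    and lower_big: "\<And>a. t \<le> a \<Longrightarrow> c * a + d' \<le> H a"
    and B: "B \<subseteq> pairs5"
    and big: "\<And>i j. (j, i) \<in> B \<Longrightarrow> t \<le> 4 - (norm (p i - p j))\<^sup>2"
  shows "15 * c + (10 - card B) * d + card B * d' \<le> energy (\<lambda>r. H (4 - r\<^sup>2)) p"
proof -
  define w where "w = (\<lambda>(j, i). 4 - (norm (p i - p j))\<^sup>2)"
  have unit: "norm (p i) = 1" if "i < 5" for i
    using p that by (simp add: config5_def S2_def)
  have w_nonneg: "0 \<le> w q" if "q \<in> pairs5" for q
    using that norm_diff_sq_le_unit[OF unit unit] by (auto simp: w_def pairs5_def)
  have "sum w pairs5 = (\<Sum>j<5. \<Sum>i<j. 4 - (norm (p i - p j))\<^sup>2)"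
    unfolding w_def by (rule sum_pairs5)
  also have "\<dots> = 40 - (\<Sum>j<5. \<Sum>i<j. (norm (p i - p j))\<^sup>2)"
    by (simp add: sum_subtractf eval_nat_numeral lessThan_Suc)
  finally have w_sum: "15 \<le> sum w pairs5"
    using sum_pairs_norm_diff_sq_le_unit[of 5 p] unit by simp
  have energy: "energy (\<lambda>r. H (4 - r\<^sup>2)) p = (\<Sum>q\<in>pairs5. H (w q))"
    unfolding energy_def w_def using sum_pairs5[of "\<lambda>i j. H (4 - (norm (p i - p j))\<^sup>2)"]
    by (simp add: case_prod_unfold)
  have "(\<Sum>q\<in>B. c * w q + d') \<le> (\<Sum>q\<in>B. H (w q))"
    using big by (intro sum_mono lower_big) (auto simp: w_def)
  moreover have "(\<Sum>q\<in>pairs5 - B. c * w q + d) \<le> (\<Sum>q\<in>pairs5 - B. H (w q))"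
    using w_nonneg by (intro sum_mono lower) auto
  moreover have "card (pairs5 - B) = 10 - card B"
    using B by (simp add: card_Diff_subset finite_subset card_pairs5)
  moreover have "sum w pairs5 = sum w B + sum w (pairs5 - B)"
    and "(\<Sum>q\<in>pairs5. H (w q)) = (\<Sum>q\<in>B. H (w q)) + (\<Sum>q\<in>pairs5 - B. H (w q))"
    using B by (simp_all add: sum.subset_diff)
  moreover have "c * 15 \<le> c * sum w pairs5"
    using mult_left_mono[OF w_sum c] .
  ultimately show ?thesis
    by (simp add: energy sum.distrib sum_distrib_left[symmetric] distrib_left mult.commute)
qed

lemma norm_vector3_sq: "(norm (vector [a, b, c] :: real^3))\<^sup>2 = a\<^sup>2 + b\<^sup>2 + c\<^sup>2"
  unfolding power2_norm_eq_inner by (simp add: inner_vec_def sum_3 power2_eq_square)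

lemma diff_vector3: "(vector [a, b, c] :: real^3) - vector [a', b', c'] = vector [a - a', b - b', c - c']"
  by (simp add: vec_eq_iff forall_3)

lemma energy_unfold:
  "energy f p = f (norm (p 0 - p 1)) + f (norm (p 0 - p 2)) + f (norm (p 1 - p 2))
     + f (norm (p 0 - p 3)) + f (norm (p 1 - p 3)) + f (norm (p 2 - p 3))
     + f (norm (p 0 - p 4)) + f (norm (p 1 - p 4)) + f (norm (p 2 - p 4)) + f (norm (p 3 - p 4))"
  by (simp add: energy_def eval_nat_numeral lessThan_Suc)

definition triangular_bipyramid :: "nat \<Rightarrow> real^3" where
  "triangular_bipyramid i = [vector [0, 0, -1], vector [1, 0, 0], vector [-1/2, sqrt 3 / 2, 0],
     vector [-1/2, - sqrt 3 / 2, 0], vector [0, 0, 1]] ! i"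

lemma triangular_bipyramid_simps:
  "triangular_bipyramid 0 = vector [0, 0, -1]" "triangular_bipyramid (Suc 0) = vector [1, 0, 0]"
  "triangular_bipyramid 2 = vector [-1/2, sqrt 3 / 2, 0]"
  "triangular_bipyramid 3 = vector [-1/2, - sqrt 3 / 2, 0]"
  "triangular_bipyramid 4 = vector [0, 0, 1]"
  by (simp_all add: triangular_bipyramid_def numeral_eq_Suc)

lemma config5_triangular_bipyramid: "config5 triangular_bipyramid"
proof -
  have "norm (triangular_bipyramid i) = 1" if "i < 5" for i
  proof -
    have "i = 0 \<or> i = 1 \<or> i = 2 \<or> i = 3 \<or> i = 4" using that by auto
    then have "(norm (triangular_bipyramid i))\<^sup>2 = 1"
      by (auto simp: triangular_bipyramid_simps norm_vector3_sq power_divide)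
    then show ?thesis using norm_ge_zero[of "triangular_bipyramid i"] by (simp add: power2_eq_1_iff)
  qed
  then show ?thesis by (simp add: config5_def S2_def)
qed

lemma energy_triangular_bipyramid:
  "energy (\<lambda>r. H (4 - r\<^sup>2)) triangular_bipyramid = 6 * H 2 + 3 * H 1 + H 0"
  by (simp add: energy_unfold triangular_bipyramid_simps diff_vector3 norm_vector3_sq power_divide)

lemma minimizer_energy_le:
  "minimizer (\<lambda>r. H (4 - r\<^sup>2)) p \<Longrightarrow> energy (\<lambda>r. H (4 - r\<^sup>2)) p \<le> 6 * H 2 + 3 * H 1 + H 0"
  unfolding minimizer_def using config5_triangular_bipyramid energy_triangular_bipyramid[of H]
  by metis

lemma minimizer_pole_dist_gt_half:
  fixes H :: "real \<Rightarrow> real" and c d d' :: real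
  assumes min: "minimizer (\<lambda>r. H (4 - r\<^sup>2)) p" and c: "0 \<le> c"
    and lower: "\<And>a. 0 \<le> a \<Longrightarrow> c * a + d \<le> H a"
    and lower_big: "\<And>a. 15/4 \<le> a \<Longrightarrow> c * a + d' \<le> H a"
    and gap: "6 * H 2 + 3 * H 1 + H 0 < 15 * c + 9 * d + d'"
  shows "1/2 < norm (p 4 - p 0)"
proof (rule ccontr)
  assume "\<not> ?thesis"
  then have "(norm (p 0 - p 4))\<^sup>2 \<le> (1/2)\<^sup>2"
    by (simp add: norm_minus_commute power_mono)
  then have close: "15/4 \<le> 4 - (norm (p 0 - p 4))\<^sup>2"
    by (simp add: power_divide)
  have "15 * c + 9 * d + d' \<le> energy (\<lambda>r. H (4 - r\<^sup>2)) p"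
    using energy_ge_affine_minorants[of p c d H "15/4" d' "{(4, 0)}"] min c lower lower_big close
    by (simp add: minimizer_def pairs5_def)
  also have "\<dots> \<le> 6 * H 2 + 3 * H 1 + H 0"
    using min by (rule minimizer_energy_le)
  finally show False using gap by simp
qed

lemma normalized_minimizer_pole_dist_gt:
  fixes H :: "real \<Rightarrow> real" and c d d' :: real
  assumes min: "minimizer (\<lambda>r. H (4 - r\<^sup>2)) p" and np: "normalized p" and i: "i \<in> {1, 2, 3}"
    and c: "0 \<le> c"
    and lower: "\<And>a. 0 \<le> a \<Longrightarrow> c * a + d \<le> H a"
    and lower_big: "\<And>a. 36/13 \<le> a \<Longrightarrow> c * a + d' \<le> H a"
    and gap: "6 * H 2 + 3 * H 1 + H 0 < 15 * c + 8 * d + 2 * d'"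
  shows "4 / sqrt 13 < norm (p 4 - p i)"
proof (rule ccontr)
  assume "\<not> ?thesis"
  then have near: "norm (p 4 - p j) \<le> 4 / sqrt 13" if "j \<in> {0, i}" for j
    using np i that unfolding normalized_def by force
  then have close: "36/13 \<le> 4 - (norm (p j - p 4))\<^sup>2" if "j \<in> {0, i}" for j
    using power_mono[OF near[OF that], of 2]
    by (simp add: norm_minus_commute power_divide)
  let ?B = "{(4, 0), (4, i)} :: (nat \<times> nat) set"
  have B: "?B \<subseteq> pairs5" "card ?B = 2" using i by (auto simp: pairs5_def)
  have "15 * c + (10 - card ?B) * d + card ?B * d' \<le> energy (\<lambda>r. H (4 - r\<^sup>2)) p"
    using min c lower lower_big B(1) close
    by (intro energy_ge_affine_minorants[where t = "36/13"]) (auto simp: minimizer_def)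
  then have "15 * c + 8 * d + 2 * d' \<le> energy (\<lambda>r. H (4 - r\<^sup>2)) p"
    using B(2) by simp
  also have "\<dots> \<le> 6 * H 2 + 3 * H 1 + H 0"
    using min by (rule minimizer_energy_le)
  finally show False using gap by simp
qed

lemma power3_ge_tangent:
  fixes a s :: real
  assumes "0 \<le> a" "0 \<le> s"
  shows "3 * s\<^sup>2 * a - 2 * s ^ 3 \<le> a ^ 3"
proof -
  have "a ^ 3 - (3 * s\<^sup>2 * a - 2 * s ^ 3) = (a - s)\<^sup>2 * (a + 2 * s)"
    by (simp add: power2_eq_square power3_eq_cube algebra_simps)
  also have "\<dots> \<ge> 0" using assms by simp
  finally show ?thesis by simp
qed

lemma power3_ge_line_above:
  fixes a c t :: real
  assumes "0 \<le> t" "t \<le> a" "c \<le> 3 * t\<^sup>2"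
  shows "t ^ 3 + c * (a - t) \<le> a ^ 3"
proof -
  have "c * (a - t) \<le> 3 * t\<^sup>2 * (a - t)"
    using assms by (intro mult_right_mono) auto
  also have "\<dots> \<le> (a\<^sup>2 + a * t + t\<^sup>2) * (a - t)"
  proof -
    have "t * t \<le> a * a" "t * t \<le> a * t" using assms by (auto intro: mult_mono)
    then show ?thesis using assms by (intro mult_right_mono) (auto simp: power2_eq_square)
  qed
  also have "\<dots> = a ^ 3 - t ^ 3"
    by (simp add: power2_eq_square power3_eq_cube algebra_simps)
  finally show ?thesis by simp
qed

lemma G_eq: "G k = (\<lambda>r. (4 - r\<^sup>2) ^ k)"
  by (simp add: fun_eq_iff G_def)

lemma minimizer_pole_dists_of_mono:
  fixes H :: "real \<Rightarrow> real"
  assumes min: "minimizer (\<lambda>r. H (4 - r\<^sup>2)) p" and np: "normalized p"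
    and nonneg: "\<And>a. 0 \<le> a \<Longrightarrow> 0 \<le> H a"
    and mono: "\<And>a b. 0 \<le> a \<Longrightarrow> a \<le> b \<Longrightarrow> H a \<le> H b"
    and far: "6 * H 2 + 3 * H 1 + H 0 < H (15/4)"
    and near: "6 * H 2 + 3 * H 1 + H 0 < 2 * H (36/13)"
  shows "1/2 < norm (p 4 - p 0) \<and> (\<forall>i\<in>{1, 2, 3}. 4 / sqrt 13 < norm (p 4 - p i))"
proof
  show "1/2 < norm (p 4 - p 0)"
    by (rule minimizer_pole_dist_gt_half[where c = 0 and d = 0 and d' = "H (15/4)"])
       (use min nonneg mono far in auto)
  show "\<forall>i\<in>{1, 2, 3}. 4 / sqrt 13 < norm (p 4 - p i)"
    by (intro ballI normalized_minimizer_pole_dist_gt[where c = 0 and d = 0 and d' = "H (36/13)"])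
       (use min np nonneg mono near in auto)
qed

lemma minimizer_G3_pole_dists:
  assumes np: "normalized p" and min: "minimizer (G 3) p"
  shows "1/2 < norm (p 4 - p 0) \<and> (\<forall>i\<in>{1, 2, 3}. 4 / sqrt 13 < norm (p 4 - p i))"
proof
  have min': "minimizer (\<lambda>r. (\<lambda>a. a ^ 3) (4 - r\<^sup>2)) p" using min by (simp add: G_eq)
  show "1/2 < norm (p 4 - p 0)"
  proof (rule minimizer_pole_dist_gt_half[where H = "\<lambda>a. a ^ 3" and c = 0 and d = 0
        and d' = "(15/4) ^ 3"])
    show "6 * 2 ^ 3 + 3 * 1 ^ 3 + 0 ^ 3 < 15 * 0 + 9 * 0 + (15/4 :: real) ^ 3"
      by (simp add: power_divide)
  qed (use min' in \<open>auto intro: power_mono\<close>)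
  show "\<forall>i\<in>{1, 2, 3}. 4 / sqrt 13 < norm (p 4 - p i)"
  proof
    fix i :: nat assume i: "i \<in> {1, 2, 3}"
    \<comment> \<open>tangent at \<open>6/5 \<approx> (15 - 2 \<cdot> 36/13) / 8\<close>, the mean of the eight remaining weights\<close>
    let ?c = "3 * (6/5)\<^sup>2 :: real" and ?t = "36/13 :: real"
    show "4 / sqrt 13 < norm (p 4 - p i)"
    proof (rule normalized_minimizer_pole_dist_gt[where H = "\<lambda>a. a ^ 3" and c = ?c
          and d = "- 2 * (6/5) ^ 3" and d' = "?t ^ 3 - ?c * ?t"])
      show "?c * a + - 2 * (6/5) ^ 3 \<le> a ^ 3" if "0 \<le> a" for a
        using power3_ge_tangent[OF that, of "6/5"] by (simp add: mult.commute)
      show "?c * a + (?t ^ 3 - ?c * ?t) \<le> a ^ 3" if "?t \<le> a" for a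
        using power3_ge_line_above[OF _ that, of ?c] by (simp add: power_divide right_diff_distrib)
      show "6 * 2 ^ 3 + 3 * 1 ^ 3 + 0 ^ 3 < 15 * ?c + 8 * (- 2 * (6/5) ^ 3) + 2 * (?t ^ 3 - ?c * ?t)"
        by (simp add: power_divide)
    qed (use min' np i in auto)
  qed
qed

lemma minimizer_G_pole_dists:
  assumes k: "k \<in> {4, 5, 6}" and np: "normalized p" and min: "minimizer (G k) p"
  shows "1/2 < norm (p 4 - p 0) \<and> (\<forall>i\<in>{1, 2, 3}. 4 / sqrt 13 < norm (p 4 - p i))"
proof (rule minimizer_pole_dists_of_mono[where H = "\<lambda>a. a ^ k"])
  show "minimizer (\<lambda>r. (4 - r\<^sup>2) ^ k) p" using min by (simp add: G_eq)
  show "6 * 2 ^ k + 3 * 1 ^ k + 0 ^ k < (15/4 :: real) ^ k"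
    and "6 * 2 ^ k + 3 * 1 ^ k + 0 ^ k < 2 * (36/13 :: real) ^ k"
    using k by (auto simp: power_divide)
qed (use np in \<open>auto intro: power_mono\<close>)

lemma G10sharp_eq: "G10sharp = (\<lambda>r. (\<lambda>a. a ^ 10 + 28 * a ^ 5 + 102 * a\<^sup>2) (4 - r\<^sup>2))"
  by (simp add: fun_eq_iff G10sharp_def G_def)

lemma minimizer_G10sharp_pole_dists:
  assumes np: "normalized p" and min: "minimizer G10sharp p"
  shows "1/2 < norm (p 4 - p 0) \<and> (\<forall>i\<in>{1, 2, 3}. 4 / sqrt 13 < norm (p 4 - p i))"
proof (rule minimizer_pole_dists_of_mono[where H = "\<lambda>a. a ^ 10 + 28 * a ^ 5 + 102 * a\<^sup>2"])
  show "minimizer (\<lambda>r. (\<lambda>a. a ^ 10 + 28 * a ^ 5 + 102 * a\<^sup>2) (4 - r\<^sup>2)) p"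
    using min by (simp only: G10sharp_eq)
  show "a ^ 10 + 28 * a ^ 5 + 102 * a\<^sup>2 \<le> b ^ 10 + 28 * b ^ 5 + 102 * b\<^sup>2"
    if "0 \<le> a" "a \<le> b" for a b :: real
    using that by (intro add_mono mult_left_mono power_mono) auto
qed (use np in \<open>auto simp: power_divide\<close>)

theorem lemma2p1:
  fixes f :: "real \<Rightarrow> real" and p :: "nat \<Rightarrow> real^3"
  assumes "f \<in> {G 3, G 4, G 5, G 6, G10sharp}"
    and "config5 p"
    and "\<forall>i<5. \<forall>j<5. i \<noteq> j \<longrightarrow> p i \<noteq> p j"
    and "normalized p"
    and "minimizer f p"
  shows "norm (p 4 - p 0) > 1/2 \<and> (\<forall>i\<in>{1,2,3}. norm (p 4 - p i) > 4 / sqrt 13)"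
proof -
  consider "f = G 3" | k where "k \<in> {4, 5, 6}" "f = G k" | "f = G10sharp"
    using assms(1) by auto
  then show ?thesis
  proof cases
    case 1
    then show ?thesis using minimizer_G3_pole_dists assms(4,5) by simp
  next
    case (2 k)
    then show ?thesis using minimizer_G_pole_dists assms(4,5) by simp
  next
    case 3
    then show ?thesis using minimizer_G10sharp_pole_dists assms(4,5) by simp
  qed
qed

end
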